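(* Let $\alpha\in(0,1)$. For distinct points $x_1,x_2,x_3,x_4\in\mathbf{R}^2$ write $d_{i,j}=\|x_j-x_i\|$ and $$\rho(x_1,x_2;x_3,x_4)=\frac{(d_{1,4}^{\alpha}-d_{1,3}^{\alpha})-(d_{2,4}^{\alpha}-d_{2,3}^{\alpha})}{2(d_{1,2}d_{3,4})^{\alpha/2}} ,$$ and extend the same formula to the case where $\{x_1,x_2\}$ and $\{x_3,x_4\}$ share exactly one point. Let $P_1$ be a homogeneous Poisson point process of intensity $1$ in $\mathbf{R}^2$, $\preceq$ the lexicographic order, and for distinct points define $$p_{2,1}(x_1,x_2,x_3,x_4)=\mathbb{P}\big[x_1\sim x_2,\ x_3\sim x_4 \text{ in } \mathrm{Del}(P_1\cup\{x_1,x_2,x_3,x_4\}),\ x_1\preceq x_2,\ x_3\preceq x_4\big],$$ $$q^{(3\leftrightarrow1)}_{2,1}(x_1,x_2,x_4)=\mathbb{P}[x_1\sim x_2,\ x_1\sim x_4\text{ in }\mathrm{Del}(P_1\cup\{x_1,x_2,x_4\}),\ x_1\preceq x_2,\ x_1\preceq x_4],$$ $$q^{(3\leftrightarrow2)}_{2,1}(x_1,x_2,x_4)=\mathbb{P}[x_1\sim x_2,\ x_2\sim x_4\text{ in }\mathrm{Del}(P_1\cup\{x_1,x_2,x_4\}),\ x_1\preceq x_2\preceq x_4],$$ $$q^{(4\leftrightarrow1)}_{2,1}(x_1,x_2,x_3)=\mathbb{P}[x_1\sim x_2,\ x_1\sim x_3\text{ in }\mathrm{Del}(P_1\cup\{x_1,x_2,x_3\}),\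 x_3\preceq x_1\preceq x_2],$$ $$q^{(4\leftrightarrow2)}_{2,1}(x_1,x_2,x_3)=\mathbb{P}[x_1\sim x_2,\ x_2\sim x_3\text{ in }\mathrm{Del}(P_1\cup\{x_1,x_2,x_3\}),\ x_1\preceq x_2,\ x_3\preceq x_2].$$ Set $$\sigma^2_{0,V_2}=\int_{(\mathbf{R}^2)^3}\rho(0,x_2;x_3,x_4)^2\,p_{2,1}(0,x_2,x_3,x_4)\,dx_2\,dx_3\,dx_4,$$ $$\sigma^2_{1,(3\leftrightarrow1),V_2}=\int_{(\mathbf{R}^2)^2}\rho(0,x_2;0,x_4)^2q^{(3\leftrightarrow1)}_{2,1}(0,x_2,x_4)\,dx_2dx_4,\quad \sigma^2_{1,(3\leftrightarrow2),V_2}=\int_{(\mathbf{R}^2)^2}\rho(0,x_2;x_2,x_4)^2q^{(3\leftrightarrow2)}_{2,1}(0,x_2,x_4)\,dx_2dx_4,$$ $$\sigma^2_{1,(4\leftrightarrow1),V_2}=\int_{(\mathbf{R}^2)^2}\rho(0,x_2;x_3,0)^2q^{(4\leftrightarrow1)}_{2,1}(0,x_2,x_3)\,dx_2dx_3,\quad \sigma^2_{1,(4\leftrightarrow2),V_2}=\int_{(\mathbf{R}^2)^2}\rho(0,x_2;x_3,x_2)^2q^{(4\leftrightarrow2)}_{2,1}(0,x_2,x_3)\,dx_2dx_3,$$ and $$\sigma^2_{V_2}=\frac23\Big(\sigma^2_{0,V_2}+\sigma^2_{1,(3\leftrightarrow1),V_2}+\sigma^2_{1,(3\leftrightarrow2),V_2}+\sigma^2_{1,(4\leftrightarrow1),V_2}+\sigma^2_{1,(4\leftrightarrow2),V_2}\Big)+2.$$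 Then $\sigma^2_{V_2}$ is finite.
   Context: $x\sim y$ in $\mathrm{Del}(P)$ means that $x,y$ are joined by an edge of the Delaunay triangulation of the point set $P$ (the unique triangulation with vertices in $P$ whose triangles have circumdisks containing no point of $P$ in their interior). The quantity $\rho(x_1,x_2;x_3,x_4)$ is the correlation between the normalized increments $W(x_2)-W(x_1)$ and $W(x_4)-W(x_3)$ of an isotropic fractional Brownian field with Hurst parameter $H=\alpha/2$ (covariance $\frac{\sigma^2}{2}(\|x\|^{\alpha}+\|y\|^{\alpha}-\|y-x\|^{\alpha})$). *)

theory Defs
  imports "HOL-Probability.Probability"
begin

type_synonym pt = "real^2"

definition lex_le :: "pt \<Rightarrow> pt \<Rightarrow> bool" where
  "lex_le x y \<longleftrightarrow> x$1 < y$1 \<or> (x$1 = y$1 \<and> x$2 \<le> y$2)"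

text \<open>Delaunay edge: x, y are two vertices of a triangle xyz with vertices in P whose
  open circumdisk contains no point of P (existence of an equidistant centre forces
  x, y, z to be non-collinear).\<close>
definition del_edge :: "pt set \<Rightarrow> pt \<Rightarrow> pt \<Rightarrow> bool" where
  "del_edge P x y \<longleftrightarrow> x \<in> P \<and> y \<in> P \<and> x \<noteq> y \<and>
     (\<exists>z\<in>P. z \<noteq> x \<and> z \<noteq> y \<and>
        (\<exists>c. dist c x = dist c y \<and> dist c x = dist c z \<and> P \<inter> ball c (dist c x) = {}))"

definition poisson_pp :: "'w measure \<Rightarrow> ('w \<Rightarrow> pt set) \<Rightarrow> bool" where
  "poisson_pp M Phi \<longleftrightarrow> prob_space M \<and>
     (\<forall>w\<in>space M. \<forall>B. bounded B \<longrightarrow> finite (Phi w \<inter> B)) \<and>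
     (\<forall>B. B \<in> sets lborel \<and> bounded B \<longrightarrow>
        (\<lambda>w. card (Phi w \<inter> B)) \<in> measurable M (count_space UNIV) \<and>
        (\<forall>k. measure M {w\<in>space M. card (Phi w \<inter> B) = k}
              = exp (- measure lborel B) * measure lborel B ^ k / fact k)) \<and>
     (\<forall>(I::nat set) Bs. finite I \<longrightarrow> (\<forall>i\<in>I. Bs i \<in> sets lborel \<and> bounded (Bs i)) \<longrightarrow>
        disjoint_family_on Bs I \<longrightarrow>
        prob_space.indep_vars M (\<lambda>_. count_space UNIV) (\<lambda>i w. card (Phi w \<inter> Bs i)) I)"

definition rho :: "real \<Rightarrow> pt \<Rightarrow> pt \<Rightarrow> pt \<Rightarrow> pt \<Rightarrow> real" where
  "rho \<alpha> x1 x2 x3 x4 =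
     ((dist x1 x4 powr \<alpha> - dist x1 x3 powr \<alpha>) - (dist x2 x4 powr \<alpha> - dist x2 x3 powr \<alpha>))
     / (2 * (dist x1 x2 * dist x3 x4) powr (\<alpha> / 2))"

definition p21 :: "'w measure \<Rightarrow> ('w \<Rightarrow> pt set) \<Rightarrow> pt \<Rightarrow> pt \<Rightarrow> pt \<Rightarrow> pt \<Rightarrow> real" where
  "p21 M Phi x1 x2 x3 x4 = measure M {w\<in>space M.
     del_edge (Phi w \<union> {x1,x2,x3,x4}) x1 x2 \<and> del_edge (Phi w \<union> {x1,x2,x3,x4}) x3 x4 \<and>
     lex_le x1 x2 \<and> lex_le x3 x4}"

definition q31 :: "'w measure \<Rightarrow> ('w \<Rightarrow> pt set) \<Rightarrow> pt \<Rightarrow> pt \<Rightarrow> pt \<Rightarrow> real" where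
  "q31 M Phi x1 x2 x4 = measure M {w\<in>space M.
     del_edge (Phi w \<union> {x1,x2,x4}) x1 x2 \<and> del_edge (Phi w \<union> {x1,x2,x4}) x1 x4 \<and>
     lex_le x1 x2 \<and> lex_le x1 x4}"

definition q32 :: "'w measure \<Rightarrow> ('w \<Rightarrow> pt set) \<Rightarrow> pt \<Rightarrow> pt \<Rightarrow> pt \<Rightarrow> real" where
  "q32 M Phi x1 x2 x4 = measure M {w\<in>space M.
     del_edge (Phi w \<union> {x1,x2,x4}) x1 x2 \<and> del_edge (Phi w \<union> {x1,x2,x4}) x2 x4 \<and>
     lex_le x1 x2 \<and> lex_le x2 x4}"

definition q41 :: "'w measure \<Rightarrow> ('w \<Rightarrow> pt set) \<Rightarrow> pt \<Rightarrow> pt \<Rightarrow> pt \<Rightarrow> real" where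
  "q41 M Phi x1 x2 x3 = measure M {w\<in>space M.
     del_edge (Phi w \<union> {x1,x2,x3}) x1 x2 \<and> del_edge (Phi w \<union> {x1,x2,x3}) x1 x3 \<and>
     lex_le x3 x1 \<and> lex_le x1 x2}"

definition q42 :: "'w measure \<Rightarrow> ('w \<Rightarrow> pt set) \<Rightarrow> pt \<Rightarrow> pt \<Rightarrow> pt \<Rightarrow> real" where
  "q42 M Phi x1 x2 x3 = measure M {w\<in>space M.
     del_edge (Phi w \<union> {x1,x2,x3}) x1 x2 \<and> del_edge (Phi w \<union> {x1,x2,x3}) x2 x3 \<and>
     lex_le x1 x2 \<and> lex_le x3 x2}"

definition sigma0 :: "real \<Rightarrow> 'w measure \<Rightarrow> ('w \<Rightarrow> pt set) \<Rightarrow> ennreal" where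
  "sigma0 \<alpha> M Phi = (\<integral>\<^sup>+ x2. \<integral>\<^sup>+ x3. \<integral>\<^sup>+ x4.
     (if distinct [0, x2, x3, x4]
      then ennreal ((rho \<alpha> 0 x2 x3 x4)\<^sup>2 * p21 M Phi 0 x2 x3 x4) else 0) \<partial>lborel \<partial>lborel \<partial>lborel)"

definition sigma1_31 :: "real \<Rightarrow> 'w measure \<Rightarrow> ('w \<Rightarrow> pt set) \<Rightarrow> ennreal" where
  "sigma1_31 \<alpha> M Phi = (\<integral>\<^sup>+ x2. \<integral>\<^sup>+ x4.
     (if distinct [0, x2, x4]
      then ennreal ((rho \<alpha> 0 x2 0 x4)\<^sup>2 * q31 M Phi 0 x2 x4) else 0) \<partial>lborel \<partial>lborel)"

definition sigma1_32 :: "real \<Rightarrow> 'w measure \<Rightarrow> ('w \<Rightarrow> pt set) \<Rightarrow> ennreal" where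
  "sigma1_32 \<alpha> M Phi = (\<integral>\<^sup>+ x2. \<integral>\<^sup>+ x4.
     (if distinct [0, x2, x4]
      then ennreal ((rho \<alpha> 0 x2 x2 x4)\<^sup>2 * q32 M Phi 0 x2 x4) else 0) \<partial>lborel \<partial>lborel)"

definition sigma1_41 :: "real \<Rightarrow> 'w measure \<Rightarrow> ('w \<Rightarrow> pt set) \<Rightarrow> ennreal" where
  "sigma1_41 \<alpha> M Phi = (\<integral>\<^sup>+ x2. \<integral>\<^sup>+ x3.
     (if distinct [0, x2, x3]
      then ennreal ((rho \<alpha> 0 x2 x3 0)\<^sup>2 * q41 M Phi 0 x2 x3) else 0) \<partial>lborel \<partial>lborel)"

definition sigma1_42 :: "real \<Rightarrow> 'w measure \<Rightarrow> ('w \<Rightarrow> pt set) \<Rightarrow> ennreal" where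
  "sigma1_42 \<alpha> M Phi = (\<integral>\<^sup>+ x2. \<integral>\<^sup>+ x3.
     (if distinct [0, x2, x3]
      then ennreal ((rho \<alpha> 0 x2 x3 x2)\<^sup>2 * q42 M Phi 0 x2 x3) else 0) \<partial>lborel \<partial>lborel)"

definition sigmaV2 :: "real \<Rightarrow> 'w measure \<Rightarrow> ('w \<Rightarrow> pt set) \<Rightarrow> ennreal" where
  "sigmaV2 \<alpha> M Phi = 2/3 * (sigma0 \<alpha> M Phi + sigma1_31 \<alpha> M Phi + sigma1_32 \<alpha> M Phi
      + sigma1_41 \<alpha> M Phi + sigma1_42 \<alpha> M Phi) + 2"

end

(*
  If x ~ y in Del(P), the circumcentre of a Delaunay triangle on xy lies on
  the perpendicular bisector of xy, so its empty circumdisk contains one of the two disks of radius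
  |x - y|/4 centred at the midpoint plus or minus a quarter of the rotated edge vector. These two
  disks depend only on x and y, so by the Poisson void probability an edge has probability at most
  2 exp(-pi |x - y|^2 / 16), which beats every power of 1 + |x - y|.

  Since alpha <= 1, d^alpha is again a metric, whence |rho| <= 1; this settles the four terms in
  which the two edges share a vertex. In the first term nothing ties x3 to the origin, and there
  rho itself decays: its numerator is a mixed second difference of |.|^alpha, bounded through the
  Hessian by |x2| |x4 - x3| |x3|^(alpha - 2) once x3 is far away, so rho^2 is at most a constant
  times (|x2| |x4 - x3| / |x3|^2)^(2 - alpha). The resulting weight (1 + |x3|)^(2 alpha - 4) is
  integrable in the plane precisely because alpha < 1.
*)
theory Submission
  imports Defs
begin

section \<open>Integrability of radially decaying weights\<close>

lemma emeasure_ball_plane: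
  assumes "0 \<le> r"
  shows "emeasure lborel (ball (c::real^2) r) = ennreal (pi * r\<^sup>2)"
  using assms unit_ball_vol_even[of 1] by (simp add: emeasure_ball)

lemma nn_integral_radial_le:
  fixes g :: "real \<Rightarrow> real" and c :: "real^2"
  assumes nonneg: "\<And>t. 0 \<le> t \<Longrightarrow> 0 \<le> g t"
    and antimono: "\<And>s t. 0 \<le> s \<Longrightarrow> s \<le> t \<Longrightarrow> g t \<le> g s"
    and summable: "summable (\<lambda>n. g n * (2 * real n + 1))"
  shows "(\<integral>\<^sup>+x. ennreal (g (dist x c)) \<partial>lborel) \<le> ennreal (pi * (\<Sum>n. g n * (2 * real n + 1)))"
proof -
  define A where "A n = ball c (real n + 1) - ball c (real n)" for n :: nat
  have A_sets: "A n \<in> sets lborel" for n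
    unfolding A_def by auto
  have vol_A: "emeasure lborel (A n) = ennreal (pi * (2 * real n + 1))" for n
  proof -
    have "emeasure lborel (A n) = emeasure lborel (ball c (real n + 1)) - emeasure lborel (ball c n)"
      unfolding A_def by (rule emeasure_Diff) (auto simp: emeasure_ball_plane)
    also have "\<dots> = ennreal (pi * (real n + 1)\<^sup>2) - ennreal (pi * (real n)\<^sup>2)"
      by (simp add: emeasure_ball_plane)
    also have "\<dots> = ennreal (pi * (2 * real n + 1))"
      by (subst ennreal_minus) (auto simp: power2_eq_square algebra_simps)
    finally show ?thesis .
  qed
  have pointwise: "ennreal (g (dist x c)) \<le> (\<Sum>n. ennreal (g n) * indicator (A n) x)" for x
  proof -
    define k where "k = nat \<lfloor>dist x c\<rfloor>"
    have "real k = \<lfloor>dist x c\<rfloor>"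
      unfolding k_def by simp
    then have k: "real k \<le> dist x c" "dist x c < real k + 1"
      by linarith+
    then have "x \<in> A k"
      unfolding A_def by (auto simp: dist_commute)
    have "ennreal (g (dist x c)) \<le> ennreal (g k)"
      using antimono k(1) by (auto intro: ennreal_leI)
    also have "\<dots> = (\<Sum>n\<in>{k}. ennreal (g n) * indicator (A n) x)"
      using \<open>x \<in> A k\<close> by simp
    also have "\<dots> \<le> (\<Sum>n. ennreal (g n) * indicator (A n) x)"
      by (rule sum_le_suminf) auto
    finally show ?thesis .
  qed
  have "(\<integral>\<^sup>+x. ennreal (g (dist x c)) \<partial>lborel) \<le> (\<integral>\<^sup>+x. (\<Sum>n. ennreal (g n) * indicator (A n) x) \<partial>lborel)"
    by (intro nn_integral_mono pointwise)
  also have "\<dots> = (\<Sum>n. ennreal (g n) * emeasure lborel (A n))"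
    using A_sets by (simp add: nn_integral_suminf nn_integral_cmult_indicator)
  also have "\<dots> = (\<Sum>n. ennreal (pi * (g n * (2 * real n + 1))))"
    using nonneg by (intro suminf_cong) (simp add: vol_A ennreal_mult[symmetric] mult_ac)
  also have "\<dots> = ennreal (\<Sum>n. pi * (g n * (2 * real n + 1)))"
    using nonneg by (intro suminf_ennreal2 summable_mult summable) auto
  also have "\<dots> = ennreal (pi * (\<Sum>n. g n * (2 * real n + 1)))"
    using summable by (simp add: suminf_mult)
  finally show ?thesis .
qed

lemma nn_integral_decay_bounded:
  assumes "2 < p"
  obtains B where "0 \<le> B"
    and "\<And>(C::real) (c::real^2). 0 \<le> C \<Longrightarrow> (\<integral>\<^sup>+x. ennreal (C * (1 + dist x c) powr (- p)) \<partial>lborel) \<le> ennreal (C * B)"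
proof -
  define g where "g t = (1 + t) powr (- p)" for t :: real
  have summable: "summable (\<lambda>n. g n * (2 * real n + 1))"
  proof (rule summable_comparison_test')
    show "summable (\<lambda>n. 2 * real (Suc n) powr (1 - p))"
      using assms by (subst summable_Suc_iff[of "\<lambda>n. 2 * real n powr (1 - p)"])
        (simp add: summable_real_powr_iff)
    fix n
    have "g n * (2 * real n + 1) \<le> (1 + real n) powr (- p) * (2 * (1 + real n))"
      unfolding g_def by (intro mult_left_mono) auto
    also have "\<dots> = 2 * real (Suc n) powr (1 - p)"
      using powr_add[of "1 + real n" 1 "- p"] by simp
    finally show "norm (g n * (2 * real n + 1)) \<le> 2 * real (Suc n) powr (1 - p)"
      unfolding g_def by simp
  qed
  define B where "B = pi * (\<Sum>n. g n * (2 * real n + 1))"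
  have "0 \<le> B"
    unfolding B_def g_def by (intro mult_nonneg_nonneg suminf_nonneg summable[unfolded g_def]) auto
  moreover have "(\<integral>\<^sup>+x. ennreal (C * g (dist x c)) \<partial>lborel) \<le> ennreal (C * B)"
    if "0 \<le> C" for C and c :: "real^2"
  proof -
    have g_decreasing: "g t \<le> g s" if "0 \<le> s" "s \<le> t" for s t
      unfolding g_def using that assms by (intro powr_mono2') auto
    have "(\<lambda>x. ennreal (g (dist x c))) \<in> borel_measurable lborel"
      unfolding g_def by measurable
    have "(\<integral>\<^sup>+x. ennreal (C * g (dist x c)) \<partial>lborel) = (\<integral>\<^sup>+x. ennreal C * ennreal (g (dist x c)) \<partial>lborel)"
      using \<open>0 \<le> C\<close> by (simp add: ennreal_mult g_def)
    also have "\<dots> = ennreal C * (\<integral>\<^sup>+x. ennreal (g (dist x c)) \<partial>lborel)"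
      by (rule nn_integral_cmult) fact
    also have "\<dots> \<le> ennreal C * ennreal B"
      unfolding B_def using g_decreasing summable
      by (intro mult_left_mono nn_integral_radial_le) (auto simp: g_def)
    finally show ?thesis
      using \<open>0 \<le> C\<close> \<open>0 \<le> B\<close> by (simp add: ennreal_mult)
  qed
  ultimately show ?thesis
    using that unfolding g_def by blast
qed

lemma nn_integral_decay_finite:
  fixes g :: "real^2 \<Rightarrow> ennreal"
  assumes "2 < p" "0 \<le> C" "\<And>x. g x \<le> ennreal (C * (1 + norm x) powr (- p))"
  shows "integral\<^sup>N lborel g < \<infinity>"
proof -
  obtain B where "0 \<le> B" and B: "\<And>(C::real) (c::real^2). 0 \<le> C \<Longrightarrow> (\<integral>\<^sup>+x. ennreal (C * (1 + dist x c) powr (- p)) \<partial>lborel) \<le> ennreal (C * B)"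
    using nn_integral_decay_bounded[OF \<open>2 < p\<close>] by metis
  have "integral\<^sup>N lborel g \<le> (\<integral>\<^sup>+x. ennreal (C * (1 + norm (x::real^2)) powr (- p)) \<partial>lborel)"
    by (intro nn_integral_mono assms(3))
  also have "\<dots> \<le> ennreal (C * B)"
    using B[of C 0] \<open>0 \<le> C\<close> by simp
  also have "\<dots> < \<infinity>"
    by simp
  finally show ?thesis .
qed

lemma nn_integral_decay_finite2:
  fixes f :: "real^2 \<Rightarrow> real^2 \<Rightarrow> ennreal" and c :: "real^2 \<Rightarrow> real^2"
  assumes "2 < p" "2 < q" "0 \<le> C"
    and f_le: "\<And>x y. f x y \<le> ennreal (C * (1 + norm x) powr (- p) * (1 + dist y (c x)) powr (- q))"
  shows "(\<integral>\<^sup>+x. \<integral>\<^sup>+y. f x y \<partial>lborel \<partial>lborel) < \<infinity>"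
proof -
  obtain B where "0 \<le> B"
    and B: "\<And>(C::real) (c::real^2). 0 \<le> C \<Longrightarrow> (\<integral>\<^sup>+y. ennreal (C * (1 + dist y c) powr (- q)) \<partial>lborel) \<le> ennreal (C * B)"
    using nn_integral_decay_bounded[OF \<open>2 < q\<close>] by metis
  show ?thesis
  proof (rule nn_integral_decay_finite[OF \<open>2 < p\<close>])
    show "0 \<le> C * B"
      using \<open>0 \<le> C\<close> \<open>0 \<le> B\<close> by simp
    fix x :: "real^2"
    have "(\<integral>\<^sup>+y. f x y \<partial>lborel) \<le> (\<integral>\<^sup>+y. ennreal (C * (1 + norm x) powr (- p) * (1 + dist y (c x)) powr (- q)) \<partial>lborel)"
      by (intro nn_integral_mono f_le)
    also have "\<dots> \<le> ennreal (C * (1 + norm x) powr (- p) * B)"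
      using \<open>0 \<le> C\<close> by (intro B) simp
    finally show "(\<integral>\<^sup>+y. f x y \<partial>lborel) \<le> ennreal (C * B * (1 + norm x) powr (- p))"
      by (simp add: mult_ac)
  qed
qed

lemma nn_integral_decay_finite3:
  fixes f :: "real^2 \<Rightarrow> real^2 \<Rightarrow> real^2 \<Rightarrow> ennreal"
  assumes "2 < p" "2 < q" "2 < s" "0 \<le> C"
    and f_le: "\<And>x y z. f x y z \<le> ennreal (C * (1 + norm x) powr (- p) * (1 + norm y) powr (- q) * (1 + dist z y) powr (- s))"
  shows "(\<integral>\<^sup>+x. \<integral>\<^sup>+y. \<integral>\<^sup>+z. f x y z \<partial>lborel \<partial>lborel \<partial>lborel) < \<infinity>"
proof -
  obtain B where "0 \<le> B"
    and B: "\<And>(C::real) (c::real^2). 0 \<le> C \<Longrightarrow> (\<integral>\<^sup>+z. ennreal (C * (1 + dist z c) powr (- s)) \<partial>lborel) \<le> ennreal (C * B)"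
    using nn_integral_decay_bounded[OF \<open>2 < s\<close>] by metis
  show ?thesis
  proof (rule nn_integral_decay_finite2[OF \<open>2 < p\<close> \<open>2 < q\<close>, where c = "\<lambda>_. 0"])
    show "0 \<le> C * B"
      using \<open>0 \<le> C\<close> \<open>0 \<le> B\<close> by simp
    fix x y :: "real^2"
    have "(\<integral>\<^sup>+z. f x y z \<partial>lborel) \<le> (\<integral>\<^sup>+z. ennreal (C * (1 + norm x) powr (- p) * (1 + norm y) powr (- q) * (1 + dist z y) powr (- s)) \<partial>lborel)"
      by (intro nn_integral_mono f_le)
    also have "\<dots> \<le> ennreal (C * (1 + norm x) powr (- p) * (1 + norm y) powr (- q) * B)"
      using \<open>0 \<le> C\<close> by (intro B) simp
    finally show "(\<integral>\<^sup>+z. f x y z \<partial>lborel) \<le> ennreal (C * B * (1 + norm x) powr (- p) * (1 + dist y 0) powr (- q))"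
      by (simp add: mult_ac)
  qed
qed

section \<open>Delaunay edges and empty disks\<close>

definition perp :: "real^2 \<Rightarrow> real^2" where
  "perp d = vector [- d$2, d$1]"

lemma inner_real2: "(x::real^2) \<bullet> y = x$1 * y$1 + x$2 * y$2"
  by (simp add: inner_vec_def sum_2)

lemma norm_perp [simp]: "norm (perp d) = norm d"
  unfolding norm_eq_sqrt_inner inner_real2 perp_def by (simp add: algebra_simps)

lemma abs_inner_perp:
  assumes "w \<bullet> d = 0"
  shows "\<bar>w \<bullet> perp d\<bar> = norm w * norm d"
proof -
  have "(w \<bullet> perp d)\<^sup>2 + (w \<bullet> d)\<^sup>2 = (w \<bullet> w) * (d \<bullet> d)"
    unfolding inner_real2 perp_def by (simp add: algebra_simps power2_eq_square)
  then have "(w \<bullet> perp d)\<^sup>2 = (norm w * norm d)\<^sup>2"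
    using assms by (simp add: power_mult_distrib dot_square_norm)
  then show ?thesis
    using real_sqrt_abs by (metis abs_mult abs_norm_cancel)
qed

lemma ball_subset_ball_aligned:
  fixes m n w :: "'a::real_inner"
  assumes aligned: "w \<bullet> n = norm w * norm n"
  shows "ball (m + (1/4) *\<^sub>R n) (norm n / 4) \<subseteq> ball (m + w) (sqrt ((norm w)\<^sup>2 + (norm n)\<^sup>2 / 4))"
proof
  fix p assume p: "p \<in> ball (m + (1/4) *\<^sub>R n) (norm n / 4)"
  define W N where "W = norm w" and "N = norm n"
  have "(norm (w - (1/4) *\<^sub>R n))\<^sup>2 = W\<^sup>2 - (w \<bullet> n) / 2 + N\<^sup>2 / 16"
    unfolding W_def N_def power2_norm_eq_inner
    by (simp add: inner_commute algebra_simps)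
  also have "\<dots> = (W - N / 4)\<^sup>2"
    using aligned unfolding W_def N_def by (simp add: power2_eq_square algebra_simps)
  finally have "norm (w - (1/4) *\<^sub>R n) = \<bar>W - N / 4\<bar>"
    by (metis norm_ge_zero real_sqrt_abs real_sqrt_unique)
  then have centre_dist: "dist (m + w) (m + (1/4) *\<^sub>R n) = \<bar>W - N / 4\<bar>"
    by (simp add: dist_norm)
  have "dist (m + w) p \<le> dist (m + w) (m + (1/4) *\<^sub>R n) + dist (m + (1/4) *\<^sub>R n) p"
    by (rule dist_triangle)
  also have "\<dots> < \<bar>W - N / 4\<bar> + N / 4"
    using p centre_dist unfolding N_def by simp
  also have "\<dots> \<le> sqrt (W\<^sup>2 + N\<^sup>2 / 4)"
  proof (cases "N / 4 \<le> W")
    case True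
    then show ?thesis
      by (simp add: real_le_rsqrt)
  next
    case False
    have "(N / 2 - W)\<^sup>2 \<le> W\<^sup>2 + N\<^sup>2 / 4"
      unfolding W_def N_def by (simp add: power2_eq_square algebra_simps)
    then show ?thesis
      using False unfolding W_def N_def by (simp add: real_le_rsqrt)
  qed
  finally show "p \<in> ball (m + w) (sqrt ((norm w)\<^sup>2 + (norm n)\<^sup>2 / 4))"
    unfolding W_def N_def by simp
qed

lemma del_edge_imp_empty_ball:
  assumes "del_edge P x y"
  shows "P \<inter> ball (midpoint x y + (1/4) *\<^sub>R perp (y - x)) (dist x y / 4) = {} \<or>
         P \<inter> ball (midpoint x y + (1/4) *\<^sub>R (- perp (y - x))) (dist x y / 4) = {}"
proof -
  obtain c where equidistant: "dist c x = dist c y" and empty: "P \<inter> ball c (dist c x) = {}"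
    using assms unfolding del_edge_def by blast
  define d m n w where "d = y - x" and "m = midpoint x y" and "n = perp d" and "w = c - m"
  have cx: "c - x = w + (1/2) *\<^sub>R d" and cy: "c - y = w - (1/2) *\<^sub>R d"
    unfolding d_def w_def m_def midpoint_def by (simp_all add: vec_eq_iff algebra_simps)
  have "(norm (c - x))\<^sup>2 = (norm (c - y))\<^sup>2"
    using equidistant by (simp add: dist_norm)
  then have orthogonal: "w \<bullet> d = 0"
    unfolding cx cy power2_norm_eq_inner
    by (simp add: inner_add_left inner_add_right inner_diff_left inner_diff_right inner_commute)
  have "(dist c x)\<^sup>2 = (norm w)\<^sup>2 + (norm n)\<^sup>2 / 4"
    using orthogonal unfolding dist_norm cx n_def power2_norm_eq_inner norm_perp
    by (simp add: inner_add_left inner_add_right inner_commute)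
  then have radius: "dist c x = sqrt ((norm w)\<^sup>2 + (norm n)\<^sup>2 / 4)"
    by (metis zero_le_dist real_sqrt_unique)
  have "norm n = dist x y" and "m + w = c"
    unfolding n_def d_def w_def by (simp_all add: dist_norm norm_minus_commute)
  moreover have "\<bar>w \<bullet> n\<bar> = norm w * norm n"
    unfolding n_def using abs_inner_perp[OF orthogonal] by simp
  then have "w \<bullet> n = norm w * norm n \<or> w \<bullet> (- n) = norm w * norm (- n)"
    by (auto simp: abs_if split: if_splits)
  ultimately show ?thesis
    using ball_subset_ball_aligned[of w n m] ball_subset_ball_aligned[of w "- n" m] empty radius
    unfolding m_def n_def d_def by auto
qed

lemma poisson_void_event:
  assumes "poisson_pp M Phi" "0 \<le> r"
  shows "{w\<in>space M. Phi w \<inter> ball c r = {}} \<in> sets M"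
    and "measure M {w\<in>space M. Phi w \<inter> ball c r = {}} = exp (- pi * r\<^sup>2)"
proof -
  have "ball c r \<in> sets lborel" "bounded (ball c r)"
    by auto
  then have count_measurable: "(\<lambda>w. card (Phi w \<inter> ball c r)) \<in> measurable M (count_space UNIV)"
    and prob_zero: "measure M {w\<in>space M. card (Phi w \<inter> ball c r) = 0} = exp (- measure lborel (ball c r))"
    using assms(1) unfolding poisson_pp_def by (auto dest: spec[of _ 0])
  have "finite (Phi w \<inter> ball c r)" if "w \<in> space M" for w
    using assms(1) that unfolding poisson_pp_def by auto
  then have "{w\<in>space M. Phi w \<inter> ball c r = {}} = {w\<in>space M. card (Phi w \<inter> ball c r) = 0}"
    by (intro Collect_cong conj_cong refl) (simp add: card_eq_0_iff)
  also have "\<dots> = (\<lambda>w. card (Phi w \<inter> ball c r)) -` {0} \<inter> space M"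
    by auto
  finally have event_eq: "{w\<in>space M. Phi w \<inter> ball c r = {}} = (\<lambda>w. card (Phi w \<inter> ball c r)) -` {0} \<inter> space M" .
  show "{w\<in>space M. Phi w \<inter> ball c r = {}} \<in> sets M"
    unfolding event_eq using count_measurable by (rule measurable_sets) simp
  have "measure lborel (ball c r) = pi * r\<^sup>2"
    using assms(2) by (simp add: measure_def emeasure_ball_plane)
  with prob_zero show "measure M {w\<in>space M. Phi w \<inter> ball c r = {}} = exp (- pi * r\<^sup>2)"
    unfolding event_eq by (simp add: vimage_def Int_def conj_commute)
qed

lemma prob_del_edge_le:
  assumes pp: "poisson_pp M Phi" and A: "A \<subseteq> {w\<in>space M. del_edge (Phi w \<union> S) x y}"
  shows "measure M A \<le> 2 * exp (- pi / 16 * (dist x y)\<^sup>2)"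
proof -
  interpret prob_space M
    using pp unfolding poisson_pp_def by simp
  define r where "r = dist x y / 4"
  define U where "U s = {w\<in>space M. Phi w \<inter> ball (midpoint x y + (s/4) *\<^sub>R perp (y - x)) r = {}}" for s :: real
  have "r \<ge> 0"
    unfolding r_def by simp
  note void = poisson_void_event[OF pp this]
  have "A \<subseteq> U 1 \<union> U (- 1)"
    using A del_edge_imp_empty_ball unfolding U_def r_def by fastforce
  then have "measure M A \<le> measure M (U 1 \<union> U (- 1))"
    using void(1) unfolding U_def by (intro finite_measure_mono) auto
  also have "\<dots> \<le> measure M (U 1) + measure M (U (- 1))"
    using void(1) unfolding U_def by (intro measure_Un_le) auto
  also have "\<dots> = 2 * exp (- pi * r\<^sup>2)"
    using void(2) unfolding U_def by simp
  finally show ?thesis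
    unfolding r_def by (simp add: power_divide)
qed

lemma exp_neg_square_le_powr:
  fixes \<kappa> q t :: real
  assumes "0 < \<kappa>" "0 \<le> q" "0 \<le> t"
  shows "exp (- \<kappa> * t\<^sup>2) \<le> exp (q\<^sup>2 / (4 * \<kappa>)) * (1 + t) powr (- q)"
proof -
  have "(1 + t) powr q = exp (q * ln (1 + t))"
    using assms by (simp add: powr_def)
  also have "\<dots> \<le> exp (q * t)"
    using assms by (simp add: mult_left_mono ln_add_one_self_le_self)
  finally have "exp (- \<kappa> * t\<^sup>2) * (1 + t) powr q \<le> exp (q * t - \<kappa> * t\<^sup>2)"
    by (simp add: exp_diff exp_minus field_simps)
  also have "\<dots> \<le> exp (q\<^sup>2 / (4 * \<kappa>))"
  proof -
    have "0 \<le> (2 * \<kappa> * t - q)\<^sup>2 / (4 * \<kappa>)"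
      using assms by simp
    then show ?thesis
      using assms by (simp add: power2_eq_square field_simps)
  qed
  finally show ?thesis
    using assms by (simp add: powr_minus field_simps)
qed

lemma prob_del_edge_le_powr:
  assumes "poisson_pp M Phi" "A \<subseteq> {w\<in>space M. del_edge (Phi w \<union> S) x y}" "0 \<le> q"
  shows "measure M A \<le> 2 * exp (4 * q\<^sup>2 / pi) * (1 + dist x y) powr (- q)"
proof -
  have "measure M A \<le> 2 * exp (- (pi / 16) * (dist x y)\<^sup>2)"
    using prob_del_edge_le[OF assms(1,2)] by simp
  also have "\<dots> \<le> 2 * (exp (q\<^sup>2 / (4 * (pi / 16))) * (1 + dist x y) powr (- q))"
    using assms(3) by (intro mult_left_mono exp_neg_square_le_powr) auto
  finally show ?thesis
    by (simp add: mult_ac)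
qed

lemma prob_two_del_edges_le:
  assumes pp: "poisson_pp M Phi" and "0 \<le> q"
    and edge12: "A \<subseteq> {w\<in>space M. del_edge (Phi w \<union> S) x1 x2}"
    and edge34: "A \<subseteq> {w\<in>space M. del_edge (Phi w \<union> S) x3 x4}"
  shows "measure M A \<le> 2 * exp (16 * q\<^sup>2 / pi) * (1 + dist x1 x2) powr (- q) * (1 + dist x3 x4) powr (- q)"
proof -
  define K a b where "K = 2 * exp (16 * q\<^sup>2 / pi)" and "a = 1 + dist x1 x2" and "b = 1 + dist x3 x4"
  have "1 \<le> a" "1 \<le> b"
    unfolding a_def b_def by simp_all
  have "measure M A \<le> K * a powr (- 2 * q)" "measure M A \<le> K * b powr (- 2 * q)"
    using prob_del_edge_le_powr[OF pp edge12, of "2 * q"] prob_del_edge_le_powr[OF pp edge34, of "2 * q"] \<open>0 \<le> q\<close>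
    unfolding K_def a_def b_def by (simp_all add: power_mult_distrib)
  then have "measure M A \<le> K * min (a powr (- 2 * q)) (b powr (- 2 * q))"
    unfolding K_def by (simp add: min_mult_distrib_left[symmetric])
  also have "min (a powr (- 2 * q)) (b powr (- 2 * q)) \<le> a powr (- q) * b powr (- q)"
  proof (cases "a \<le> b")
    case True
    then have "b powr (- q) * b powr (- q) \<le> a powr (- q) * b powr (- q)"
      using \<open>1 \<le> a\<close> \<open>0 \<le> q\<close> by (intro mult_right_mono powr_mono2') auto
    then show ?thesis
      by (simp flip: powr_add)
  next
    case False
    then have "a powr (- q) * a powr (- q) \<le> a powr (- q) * b powr (- q)"
      using \<open>1 \<le> b\<close> \<open>0 \<le> q\<close> by (intro mult_left_mono powr_mono2') auto
    then show ?thesis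
      by (simp flip: powr_add)
  qed
  finally show ?thesis
    unfolding K_def a_def b_def by (simp add: mult_left_mono mult_ac)
qed

section \<open>Bounds on the correlation coefficient\<close>

lemma powr_add_le_add_powr:
  fixes s t \<alpha> :: real
  assumes "0 \<le> s" "0 \<le> t" "0 < \<alpha>" "\<alpha> \<le> 1"
  shows "(s + t) powr \<alpha> \<le> s powr \<alpha> + t powr \<alpha>"
proof (cases "s + t = 0")
  case True
  then show ?thesis
    using assms by simp
next
  case False
  then have "0 < s + t"
    using assms by simp
  define l where "l = s / (s + t)"
  have "0 \<le> l" "l \<le> 1"
    using assms \<open>0 < s + t\<close> unfolding l_def by (auto simp: field_simps)
  have s: "s = (s + t) * l" and t: "t = (s + t) * (1 - l)"
    using \<open>0 < s + t\<close> unfolding l_def by (auto simp: field_simps)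
  have "(s + t) powr \<alpha> = (s + t) powr \<alpha> * (l + (1 - l))"
    by simp
  also have "\<dots> \<le> (s + t) powr \<alpha> * (l powr \<alpha> + (1 - l) powr \<alpha>)"
    using powr_mono'[of \<alpha> 1 l] powr_mono'[of \<alpha> 1 "1 - l"] \<open>0 \<le> l\<close> \<open>l \<le> 1\<close> assms
    by (intro mult_left_mono add_mono) auto
  also have "\<dots> = ((s + t) * l) powr \<alpha> + ((s + t) * (1 - l)) powr \<alpha>"
    using \<open>0 \<le> l\<close> \<open>l \<le> 1\<close> \<open>0 < s + t\<close> by (simp add: powr_mult distrib_left)
  also have "\<dots> = s powr \<alpha> + t powr \<alpha>"
    by (simp only: s[symmetric] t[symmetric])
  finally show ?thesis .
qed

lemma abs_dist_powr_diff_le: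
  fixes a b c :: "'a::metric_space"
  assumes "0 < \<alpha>" "\<alpha> \<le> 1"
  shows "\<bar>dist a b powr \<alpha> - dist a c powr \<alpha>\<bar> \<le> dist b c powr \<alpha>"
proof -
  have triangle: "dist x y powr \<alpha> \<le> dist x z powr \<alpha> + dist z y powr \<alpha>" for x y z :: 'a
  proof -
    have "dist x y powr \<alpha> \<le> (dist x z + dist z y) powr \<alpha>"
      using assms by (intro powr_mono2 dist_triangle) auto
    also have "\<dots> \<le> dist x z powr \<alpha> + dist z y powr \<alpha>"
      using assms by (intro powr_add_le_add_powr) auto
    finally show ?thesis .
  qed
  show ?thesis
    using triangle[of a b c] triangle[of a c b] by (simp add: dist_commute abs_le_iff)
qed

lemma rho_square_le_1:
  assumes "0 < \<alpha>" "\<alpha> \<le> 1"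
  shows "(rho \<alpha> x1 x2 x3 x4)\<^sup>2 \<le> 1"
proof -
  define N where "N = (dist x1 x4 powr \<alpha> - dist x1 x3 powr \<alpha>) - (dist x2 x4 powr \<alpha> - dist x2 x3 powr \<alpha>)"
  define A B where "A = dist x1 x2 powr \<alpha>" and "B = dist x3 x4 powr \<alpha>"
  have "\<bar>N\<bar> \<le> 2 * A" "\<bar>N\<bar> \<le> 2 * B"
    using abs_dist_powr_diff_le[OF assms, of x4 x1 x2] abs_dist_powr_diff_le[OF assms, of x3 x1 x2]
      abs_dist_powr_diff_le[OF assms, of x1 x4 x3] abs_dist_powr_diff_le[OF assms, of x2 x4 x3]
    unfolding N_def A_def B_def by (simp_all add: dist_commute)
  then have "\<bar>N\<bar> * \<bar>N\<bar> \<le> (2 * A) * (2 * B)"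
    by (intro mult_mono) auto
  then have N_square: "N\<^sup>2 \<le> 4 * (A * B)"
    by (simp add: power2_eq_square)
  show ?thesis
  proof (cases "dist x1 x2 * dist x3 x4 = 0")
    case True
    then have "rho \<alpha> x1 x2 x3 x4 = 0"
      by (auto simp: rho_def)
    then show ?thesis
      by simp
  next
    case False
    then have "0 < A * B"
      unfolding A_def B_def by simp
    have "((dist x1 x2 * dist x3 x4) powr (\<alpha> / 2))\<^sup>2 = (dist x1 x2 * dist x3 x4) powr \<alpha>"
      unfolding power2_eq_square by (simp flip: powr_add)
    also have "\<dots> = A * B"
      unfolding A_def B_def by (simp add: powr_mult)
    finally have denominator: "((dist x1 x2 * dist x3 x4) powr (\<alpha> / 2))\<^sup>2 = A * B" .
    have "(rho \<alpha> x1 x2 x3 x4)\<^sup>2 = N\<^sup>2 / (4 * (A * B))"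
      unfolding rho_def N_def[symmetric] by (simp add: power_divide power_mult_distrib denominator)
    also have "\<dots> \<le> 1"
      using N_square \<open>0 < A * B\<close> by simp
    finally show ?thesis .
  qed
qed


lemma has_real_derivative_norm_powr_line:
  fixes p v :: "'a::real_inner"
  assumes "p + t *\<^sub>R v \<noteq> 0"
  shows "((\<lambda>t. norm (p + t *\<^sub>R v) powr e) has_real_derivative
           e * norm (p + t *\<^sub>R v) powr (e - 2) * ((p + t *\<^sub>R v) \<bullet> v)) (at t)"
proof -
  define q where "q t = (p + t *\<^sub>R v) \<bullet> (p + t *\<^sub>R v)" for t
  have norm_powr: "norm z powr a = (z \<bullet> z) powr (a / 2)" for z :: 'a and a
    by (cases "z = 0") (simp_all add: norm_eq_sqrt_inner powr_half_sqrt[symmetric] powr_powr)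
  have q_expand: "q = (\<lambda>t. p \<bullet> p + 2 * t * (p \<bullet> v) + t\<^sup>2 * (v \<bullet> v))"
    unfolding q_def by (simp add: fun_eq_iff inner_commute power2_eq_square algebra_simps)
  have q_deriv: "(q has_real_derivative 2 * ((p + t *\<^sub>R v) \<bullet> v)) (at t)"
    unfolding q_expand by (auto intro!: derivative_eq_intros simp: algebra_simps power2_eq_square)
  moreover have q_pos: "0 < q t"
    using assms unfolding q_def by simp
  ultimately have "((\<lambda>t. q t powr (e / 2)) has_real_derivative
      e / 2 * q t powr (e / 2 - 1) * (2 * ((p + t *\<^sub>R v) \<bullet> v))) (at t)"
    using DERIV_fun_powr[OF q_deriv q_pos, of "e / 2"] by simp
  moreover have "q t powr (e / 2 - 1) = norm (p + t *\<^sub>R v) powr (e - 2)"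
    unfolding q_def norm_powr[of _ "e - 2"] by (simp add: diff_divide_distrib)
  moreover have "(\<lambda>t. norm (p + t *\<^sub>R v) powr e) = (\<lambda>t. q t powr (e / 2))"
    unfolding q_def norm_powr ..
  ultimately show ?thesis
    by (simp add: mult.assoc)
qed

lemma norm_powr_hessian_le:
  fixes z u v :: "'a::real_inner"
  assumes "0 < \<alpha>" "\<alpha> \<le> 1" "z \<noteq> 0"
  shows "\<bar>\<alpha> * ((\<alpha> - 2) * norm z powr (\<alpha> - 4) * (z \<bullet> u) * (z \<bullet> v) + norm z powr (\<alpha> - 2) * (u \<bullet> v))\<bar>
    \<le> 3 * norm z powr (\<alpha> - 2) * norm u * norm v"
proof -
  define Z where "Z = norm z"
  have "0 < Z"
    using assms unfolding Z_def by simp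
  have "Z * Z = Z powr 2"
    using \<open>0 < Z\<close> by (simp add: power2_eq_square)
  then have Z_powr: "Z powr (\<alpha> - 4) * (Z * Z) = Z powr (\<alpha> - 2)"
    by (simp flip: powr_add)
  have "\<bar>z \<bullet> u\<bar> * \<bar>z \<bullet> v\<bar> \<le> (Z * norm u) * (Z * norm v)"
    unfolding Z_def by (intro mult_mono Cauchy_Schwarz_ineq2) auto
  then have "Z powr (\<alpha> - 4) * (\<bar>z \<bullet> u\<bar> * \<bar>z \<bullet> v\<bar>) \<le> Z powr (\<alpha> - 4) * ((Z * norm u) * (Z * norm v))"
    by (intro mult_left_mono) auto
  also have "\<dots> = Z powr (\<alpha> - 2) * norm u * norm v"
    by (simp flip: Z_powr add: mult_ac)
  finally have "\<bar>\<alpha> - 2\<bar> * (Z powr (\<alpha> - 4) * (\<bar>z \<bullet> u\<bar> * \<bar>z \<bullet> v\<bar>)) \<le> 2 * (Z powr (\<alpha> - 2) * norm u * norm v)"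
    using assms by (rule_tac mult_mono) auto
  then have first: "\<bar>(\<alpha> - 2) * Z powr (\<alpha> - 4) * (z \<bullet> u) * (z \<bullet> v)\<bar> \<le> 2 * (Z powr (\<alpha> - 2) * norm u * norm v)"
    by (simp add: abs_mult mult_ac)
  have second: "\<bar>Z powr (\<alpha> - 2) * (u \<bullet> v)\<bar> \<le> Z powr (\<alpha> - 2) * norm u * norm v"
    using Cauchy_Schwarz_ineq2[of u v] by (simp add: abs_mult mult.assoc mult_left_mono)
  have "\<bar>\<alpha> * ((\<alpha> - 2) * Z powr (\<alpha> - 4) * (z \<bullet> u) * (z \<bullet> v) + Z powr (\<alpha> - 2) * (u \<bullet> v))\<bar>
      \<le> 1 * (2 * (Z powr (\<alpha> - 2) * norm u * norm v) + Z powr (\<alpha> - 2) * norm u * norm v)"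
    unfolding abs_mult using assms first second
    by (intro mult_mono order_trans[OF abs_triangle_ineq] add_mono) auto
  then show ?thesis
    unfolding Z_def by (simp add: mult_ac)
qed

lemma mixed_difference_norm_powr_le:
  fixes x u v :: "'a::real_inner"
  assumes "0 < \<alpha>" "\<alpha> \<le> 1" "0 < R"
    and away: "\<And>s t. 0 \<le> s \<Longrightarrow> s \<le> 1 \<Longrightarrow> 0 \<le> t \<Longrightarrow> t \<le> 1 \<Longrightarrow> R \<le> norm (x + s *\<^sub>R u + t *\<^sub>R v)"
  shows "\<bar>norm (x + u + v) powr \<alpha> - norm (x + u) powr \<alpha> - norm (x + v) powr \<alpha> + norm x powr \<alpha>\<bar>
    \<le> 3 * R powr (\<alpha> - 2) * norm u * norm v"
proof -
  \<comment> \<open>D is the derivative of |.|^alpha in direction v, and H the derivative of D in direction u.\<close>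
  define D where "D z = \<alpha> * norm z powr (\<alpha> - 2) * (z \<bullet> v)" for z
  define H where "H z = \<alpha> * ((\<alpha> - 2) * norm z powr (\<alpha> - 4) * (z \<bullet> u) * (z \<bullet> v) + norm z powr (\<alpha> - 2) * (u \<bullet> v))" for z
  have nonzero: "x + s *\<^sub>R u + t *\<^sub>R v \<noteq> 0" if "0 \<le> s" "s \<le> 1" "0 \<le> t" "t \<le> 1" for s t
    using away[OF that] \<open>0 < R\<close> by auto
  define \<phi> where "\<phi> t = norm (x + u + t *\<^sub>R v) powr \<alpha> - norm (x + t *\<^sub>R v) powr \<alpha>" for t
  have "(\<phi> has_real_derivative D (x + u + t *\<^sub>R v) - D (x + t *\<^sub>R v)) (at t)" if "0 \<le> t" "t \<le> 1" for t
    unfolding D_def \<phi>_def[abs_def] using nonzero[of 1 t] nonzero[of 0 t] that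
    by (intro DERIV_diff has_real_derivative_norm_powr_line) auto
  from MVT2[OF zero_less_one this] obtain \<tau> where "0 < \<tau>" "\<tau> < 1"
    and first_mvt: "\<phi> 1 - \<phi> 0 = (1 - 0) * (D (x + u + \<tau> *\<^sub>R v) - D (x + \<tau> *\<^sub>R v))"
    by blast
  define w where "w = x + \<tau> *\<^sub>R v"
  have "((\<lambda>s. D (w + s *\<^sub>R u)) has_real_derivative H (w + s *\<^sub>R u)) (at s)" if "0 \<le> s" "s \<le> 1" for s
  proof -
    have "w + s *\<^sub>R u \<noteq> 0"
      using nonzero[of s \<tau>] that \<open>0 < \<tau>\<close> \<open>\<tau> < 1\<close> unfolding w_def by (simp add: algebra_simps)
    then have "((\<lambda>s. norm (w + s *\<^sub>R u) powr (\<alpha> - 2)) has_real_derivative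
        (\<alpha> - 2) * norm (w + s *\<^sub>R u) powr (\<alpha> - 2 - 2) * ((w + s *\<^sub>R u) \<bullet> u)) (at s)"
      by (rule has_real_derivative_norm_powr_line)
    moreover have "((\<lambda>s. (w + s *\<^sub>R u) \<bullet> v) has_real_derivative u \<bullet> v) (at s)"
      by (auto intro!: derivative_eq_intros simp: inner_add_left)
    ultimately have "((\<lambda>s. \<alpha> * (norm (w + s *\<^sub>R u) powr (\<alpha> - 2) * ((w + s *\<^sub>R u) \<bullet> v))) has_real_derivative
        \<alpha> * ((\<alpha> - 2) * norm (w + s *\<^sub>R u) powr (\<alpha> - 2 - 2) * ((w + s *\<^sub>R u) \<bullet> u) * ((w + s *\<^sub>R u) \<bullet> v)
          + (u \<bullet> v) * norm (w + s *\<^sub>R u) powr (\<alpha> - 2))) (at s)"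
      by (intro DERIV_cmult DERIV_mult)
    then show ?thesis
      unfolding D_def H_def by (simp add: algebra_simps)
  qed
  from MVT2[OF zero_less_one this] obtain \<sigma> where "0 < \<sigma>" "\<sigma> < 1"
    and second_mvt: "D (w + 1 *\<^sub>R u) - D (w + 0 *\<^sub>R u) = (1 - 0) * H (w + \<sigma> *\<^sub>R u)"
    by blast
  define z where "z = w + \<sigma> *\<^sub>R u"
  have "R \<le> norm z"
    using away[of \<sigma> \<tau>] \<open>0 < \<sigma>\<close> \<open>\<sigma> < 1\<close> \<open>0 < \<tau>\<close> \<open>\<tau> < 1\<close> unfolding z_def w_def by (simp add: algebra_simps)
  then have "norm z powr (\<alpha> - 2) \<le> R powr (\<alpha> - 2)"
    using assms by (intro powr_mono2') auto
  have "\<bar>norm (x + u + v) powr \<alpha> - norm (x + u) powr \<alpha> - norm (x + v) powr \<alpha> + norm x powr \<alpha>\<bar> = \<bar>H z\<bar>"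
    using first_mvt second_mvt unfolding \<phi>_def z_def w_def by (simp add: algebra_simps)
  also have "\<dots> \<le> 3 * norm z powr (\<alpha> - 2) * norm u * norm v"
    unfolding H_def using assms \<open>R \<le> norm z\<close> by (intro norm_powr_hessian_le) auto
  also have "\<dots> \<le> 3 * R powr (\<alpha> - 2) * norm u * norm v"
    using \<open>norm z powr (\<alpha> - 2) \<le> R powr (\<alpha> - 2)\<close> by (intro mult_right_mono) auto
  finally show ?thesis .
qed


lemma rho_square_le_far:
  fixes x2 x3 x4 :: "real^2"
  assumes "0 < \<alpha>" "\<alpha> \<le> 1" and far: "2 * (norm x2 + dist x3 x4) \<le> norm x3"
  shows "(rho \<alpha> 0 x2 x3 x4)\<^sup>2 \<le> 36 * (norm x2 * dist x3 x4 / (norm x3)\<^sup>2) powr (2 - \<alpha>)"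
proof (cases "norm x2 * dist x3 x4 = 0")
  case True
  then have "rho \<alpha> 0 x2 x3 x4 = 0"
    by (auto simp: rho_def)
  then show ?thesis
    by simp
next
  case False
  define a b r where "a = norm x2" and "b = dist x3 x4" and "r = norm x3"
  have "0 < a" "0 < b"
    using False unfolding a_def b_def by auto
  have far': "2 * a + 2 * b \<le> r"
    using far unfolding a_def b_def r_def by simp
  then have "0 < r"
    using \<open>0 < a\<close> \<open>0 < b\<close> by linarith
  define u v where "u = - x2" and "v = x4 - x3"
  have away: "r / 2 \<le> norm (x3 + s *\<^sub>R u + t *\<^sub>R v)" if "0 \<le> s" "s \<le> 1" "0 \<le> t" "t \<le> 1" for s t
  proof -
    have "norm (s *\<^sub>R u + t *\<^sub>R v) \<le> a + b"
      using that unfolding a_def b_def u_def v_def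
      by (intro norm_triangle_le add_mono) (auto simp: dist_norm norm_minus_commute intro: mult_left_le_one_le)
    moreover have "r \<le> norm (x3 + s *\<^sub>R u + t *\<^sub>R v) + norm (s *\<^sub>R u + t *\<^sub>R v)"
      using norm_triangle_ineq4[of "x3 + s *\<^sub>R u + t *\<^sub>R v" "s *\<^sub>R u + t *\<^sub>R v"] unfolding r_def by simp
    ultimately show ?thesis
      using far' by linarith
  qed
  define N where "N = (dist 0 x4 powr \<alpha> - dist 0 x3 powr \<alpha>) - (dist x2 x4 powr \<alpha> - dist x2 x3 powr \<alpha>)"
  have "\<bar>N\<bar> = \<bar>norm (x3 + u + v) powr \<alpha> - norm (x3 + u) powr \<alpha> - norm (x3 + v) powr \<alpha> + norm x3 powr \<alpha>\<bar>"
    unfolding N_def u_def v_def by (simp add: dist_norm norm_minus_commute)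
  also have "\<dots> \<le> 3 * (r / 2) powr (\<alpha> - 2) * norm u * norm v"
    using \<open>0 < r\<close> away by (intro mixed_difference_norm_powr_le[OF assms(1,2)]) auto
  also have "\<dots> = 3 * (r / 2) powr (\<alpha> - 2) * (norm u * norm v)"
    by (simp only: mult.assoc)
  also have "norm u * norm v = a * b"
    unfolding a_def b_def u_def v_def by (simp add: dist_norm norm_minus_commute)
  also have "(r / 2) powr (\<alpha> - 2) \<le> 4 * r powr (\<alpha> - 2)"
  proof -
    have "2 powr (2 - \<alpha>) \<le> 2 powr (2::real)"
      using assms by (intro powr_mono) auto
    then show ?thesis
      using \<open>0 < r\<close> by (simp add: powr_divide powr_diff field_simps)
  qed
  finally have "\<bar>N\<bar> \<le> 12 * a * b * r powr (\<alpha> - 2)"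
    using \<open>0 < a\<close> \<open>0 < b\<close> by (simp add: mult_ac)
  then have "N\<^sup>2 \<le> (12 * a * b * r powr (\<alpha> - 2))\<^sup>2"
    by (metis abs_ge_zero power2_abs power_mono)
  also have "\<dots> = 144 * (a * b) powr \<alpha> * (a * b / r\<^sup>2) powr (2 - \<alpha>)"
  proof -
    have ab: "(a * b) powr \<alpha> * (a * b) powr (2 - \<alpha>) = (a * b)\<^sup>2"
      using \<open>0 < a\<close> \<open>0 < b\<close> by (simp flip: powr_add)
    have "(r\<^sup>2) powr (2 - \<alpha>) * (r powr (\<alpha> - 2))\<^sup>2 = (r powr (2 - \<alpha>) * r powr (\<alpha> - 2))\<^sup>2"
      by (simp add: power2_eq_square powr_mult mult_ac)
    also have "r powr (2 - \<alpha>) * r powr (\<alpha> - 2) = 1"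
      using \<open>0 < r\<close> by (simp flip: powr_add)
    finally have r: "(r powr (\<alpha> - 2))\<^sup>2 = 1 / (r\<^sup>2) powr (2 - \<alpha>)"
      using \<open>0 < r\<close> by (simp add: field_simps)
    have "(12 * a * b * r powr (\<alpha> - 2))\<^sup>2 = 144 * (a * b)\<^sup>2 / (r\<^sup>2) powr (2 - \<alpha>)"
      by (simp add: power_mult_distrib r)
    also have "\<dots> = 144 * (a * b) powr \<alpha> * ((a * b) powr (2 - \<alpha>) / (r\<^sup>2) powr (2 - \<alpha>))"
      by (simp flip: ab)
    also have "\<dots> = 144 * (a * b) powr \<alpha> * (a * b / r\<^sup>2) powr (2 - \<alpha>)"
      using \<open>0 < a\<close> \<open>0 < b\<close> by (simp add: powr_divide)
    finally show ?thesis .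
  qed
  finally have N_square: "N\<^sup>2 \<le> 144 * (a * b) powr \<alpha> * (a * b / r\<^sup>2) powr (2 - \<alpha>)" .
  have "((a * b) powr (\<alpha> / 2))\<^sup>2 = (a * b) powr \<alpha>"
    unfolding power2_eq_square by (simp flip: powr_add)
  then have "(rho \<alpha> 0 x2 x3 x4)\<^sup>2 = N\<^sup>2 / (4 * (a * b) powr \<alpha>)"
    unfolding rho_def N_def[symmetric] a_def b_def by (simp add: dist_norm power_divide power_mult_distrib)
  also have "\<dots> \<le> 36 * (a * b / r\<^sup>2) powr (2 - \<alpha>)"
    using N_square \<open>0 < a\<close> \<open>0 < b\<close> by (simp add: divide_le_eq mult_ac)
  finally show ?thesis
    unfolding a_def b_def r_def .
qed

lemma rho_square_le_decay:
  fixes x2 x3 x4 :: "real^2"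
  assumes "0 < \<alpha>" "\<alpha> \<le> 1"
  shows "(rho \<alpha> 0 x2 x3 x4)\<^sup>2 \<le> 576 * ((1 + norm x2) * (1 + dist x3 x4) / (1 + norm x3)) powr (4 - 2 * \<alpha>)"
proof -
  define a b r where "a = norm x2" and "b = dist x3 x4" and "r = norm x3"
  define Q where "Q = (1 + a) * (1 + b) / (1 + r)"
  have "0 \<le> a" "0 \<le> b" "0 \<le> r"
    unfolding a_def b_def r_def by simp_all
  then have "0 < Q"
    unfolding Q_def by simp
  consider (near) "1 + r \<le> 2 * ((1 + a) * (1 + b))" | (far) "2 * ((1 + a) * (1 + b)) < 1 + r"
    by linarith
  then have "(rho \<alpha> 0 x2 x3 x4)\<^sup>2 \<le> 576 * Q powr (4 - 2 * \<alpha>)"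
  proof cases
    case near
    then have "1 / 2 \<le> Q"
      unfolding Q_def using \<open>0 \<le> r\<close> by (simp add: field_simps)
    have "(1 / 2) powr (4::real) \<le> (1 / 2) powr (4 - 2 * \<alpha>)"
      using assms by (intro powr_mono') auto
    also have "\<dots> \<le> Q powr (4 - 2 * \<alpha>)"
      using assms \<open>1 / 2 \<le> Q\<close> by (intro powr_mono2) auto
    finally have "1 \<le> 16 * Q powr (4 - 2 * \<alpha>)"
      by (simp add: power_divide)
    then show ?thesis
      using rho_square_le_1[OF assms, of 0 x2 x3 x4] by linarith
  next
    case far
    have "2 * ((1 + a) * (1 + b)) = 2 * a + 2 * b + 1 + (1 + 2 * (a * b))"
      by (simp add: algebra_simps)
    then have "2 * a + 2 * b + 1 \<le> r"
      using far \<open>0 \<le> a\<close> \<open>0 \<le> b\<close> mult_nonneg_nonneg[of a b] by linarith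
    then have "1 \<le> r"
      using \<open>0 \<le> a\<close> \<open>0 \<le> b\<close> by linarith
    have "2 * (norm x2 + dist x3 x4) \<le> norm x3"
      using \<open>2 * a + 2 * b + 1 \<le> r\<close> unfolding a_def b_def r_def by simp
    have "a * b / r\<^sup>2 \<le> 4 * Q\<^sup>2"
    proof -
      define P where "P = (1 + a) * (1 + b)"
      have "1 \<le> P"
        unfolding P_def using mult_mono[of 1 "1 + a" 1 "1 + b"] \<open>0 \<le> a\<close> \<open>0 \<le> b\<close> by simp
      have "a * b \<le> P"
        unfolding P_def using \<open>0 \<le> a\<close> \<open>0 \<le> b\<close> by (simp add: algebra_simps)
      also have "\<dots> \<le> P\<^sup>2"
        using \<open>1 \<le> P\<close> by (simp add: power2_eq_square)
      finally have "a * b \<le> P\<^sup>2" .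
      moreover have "(1 + r)\<^sup>2 \<le> (2 * r)\<^sup>2"
        using \<open>1 \<le> r\<close> by (intro power_mono) auto
      ultimately have "a * b * (1 + r)\<^sup>2 \<le> P\<^sup>2 * (2 * r)\<^sup>2"
        by (intro mult_mono) auto
      then show ?thesis
        unfolding Q_def P_def[symmetric] using \<open>1 \<le> r\<close> by (simp add: field_simps)
    qed
    have "(rho \<alpha> 0 x2 x3 x4)\<^sup>2 \<le> 36 * (a * b / r\<^sup>2) powr (2 - \<alpha>)"
      unfolding a_def b_def r_def by (rule rho_square_le_far) fact+
    also have "\<dots> \<le> 36 * (4 * Q\<^sup>2) powr (2 - \<alpha>)"
      using assms \<open>a * b / r\<^sup>2 \<le> 4 * Q\<^sup>2\<close> \<open>0 \<le> a\<close> \<open>0 \<le> b\<close> by (intro mult_left_mono powr_mono2) auto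
    also have "(4 * Q\<^sup>2) powr (2 - \<alpha>) = 4 powr (2 - \<alpha>) * Q powr (4 - 2 * \<alpha>)"
      using \<open>0 < Q\<close> by (simp add: powr_mult powr_powr algebra_simps flip: powr_numeral)
    also have "4 powr (2 - \<alpha>) \<le> 16"
      using assms powr_mono[of "2 - \<alpha>" 2 4] by simp
    finally show ?thesis
      by (simp add: mult_right_mono)
  qed
  then show ?thesis
    unfolding Q_def a_def b_def r_def .
qed

section \<open>Finiteness of the variance\<close>

lemma sigma0_finite:
  assumes pp: "poisson_pp M Phi" and "0 < \<alpha>" "\<alpha> < 1"
  shows "sigma0 \<alpha> M Phi < \<infinity>"
proof -
  define K e where "K = 2 * exp (16 * 6\<^sup>2 / pi)" and "e = 4 - 2 * \<alpha>"
  have "(rho \<alpha> 0 x2 x3 x4)\<^sup>2 * p21 M Phi 0 x2 x3 x4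
      \<le> 576 * K * (1 + norm x2) powr (- (2 + 2 * \<alpha>)) * (1 + norm x3) powr (- e) * (1 + dist x4 x3) powr (- (2 + 2 * \<alpha>))"
    for x2 x3 x4 :: "real^2"
  proof -
    define A B R where "A = 1 + norm x2" and "B = 1 + dist x3 x4" and "R = 1 + norm x3"
    have "0 < A" "0 < B" "0 < R"
      unfolding A_def B_def R_def by (simp_all add: add_pos_nonneg)
    then have split: "(A * B / R) powr e = A powr e * B powr e * R powr (- e)"
      by (simp add: powr_divide powr_mult powr_minus_divide)
    have combine: "X powr e * X powr (- 6) = X powr (- (2 + 2 * \<alpha>))" for X :: real
      unfolding e_def by (simp flip: powr_add)
    have "p21 M Phi 0 x2 x3 x4 \<le> K * (1 + dist 0 x2) powr (- 6) * (1 + dist x3 x4) powr (- 6)"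
      unfolding p21_def K_def by (rule prob_two_del_edges_le[OF pp, where S = "{0, x2, x3, x4}"]) auto
    then have "p21 M Phi 0 x2 x3 x4 \<le> K * A powr (- 6) * B powr (- 6)"
      unfolding A_def B_def by simp
    moreover have "(rho \<alpha> 0 x2 x3 x4)\<^sup>2 \<le> 576 * (A * B / R) powr e"
      unfolding A_def B_def R_def e_def using assms by (intro rho_square_le_decay) auto
    ultimately have "(rho \<alpha> 0 x2 x3 x4)\<^sup>2 * p21 M Phi 0 x2 x3 x4 \<le> 576 * (A * B / R) powr e * (K * A powr (- 6) * B powr (- 6))"
      unfolding p21_def by (intro mult_mono) auto
    also have "\<dots> = 576 * K * A powr (- (2 + 2 * \<alpha>)) * R powr (- e) * B powr (- (2 + 2 * \<alpha>))"
      unfolding split combine[of A, symmetric] combine[of B, symmetric] by (simp only: mult_ac)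
    finally show ?thesis
      unfolding A_def B_def R_def by (simp add: dist_commute)
  qed
  then show ?thesis
    unfolding sigma0_def using assms
    by (intro nn_integral_decay_finite3[where p = "2 + 2 * \<alpha>" and q = e and s = "2 + 2 * \<alpha>" and C = "576 * K"])
      (auto intro: ennreal_leI simp: K_def e_def)
qed

lemma nn_integral_edge_pair_finite:
  fixes c :: "real^2 \<Rightarrow> real^2" and P :: "real^2 \<Rightarrow> real^2 \<Rightarrow> 'w \<Rightarrow> bool"
  assumes pp: "poisson_pp M Phi"
    and R_le: "\<And>x y. R x y \<le> 1"
    and edges: "\<And>x y w. P x y w \<Longrightarrow> del_edge (Phi w \<union> S x y) 0 x \<and> del_edge (Phi w \<union> S x y) (c x) y"
  shows "(\<integral>\<^sup>+x. \<integral>\<^sup>+y. (if D x y then ennreal (R x y * measure M {w\<in>space M. P x y w}) else 0) \<partial>lborel \<partial>lborel) < \<infinity>"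
proof (rule nn_integral_decay_finite2[where p = 3 and q = 3 and C = "2 * exp (16 * 3\<^sup>2 / pi)" and c = c])
  fix x y :: "real^2"
  have "measure M {w\<in>space M. P x y w} \<le> 2 * exp (16 * 3\<^sup>2 / pi) * (1 + dist 0 x) powr (- 3) * (1 + dist (c x) y) powr (- 3)"
    using edges by (intro prob_two_del_edges_le[OF pp]) auto
  moreover have "R x y * measure M {w\<in>space M. P x y w} \<le> measure M {w\<in>space M. P x y w}"
    using mult_right_mono[OF R_le measure_nonneg] by simp
  ultimately have "R x y * measure M {w\<in>space M. P x y w} \<le> 2 * exp (16 * 3\<^sup>2 / pi) * (1 + norm x) powr (- 3) * (1 + dist y (c x)) powr (- 3)"
    by (simp add: dist_commute)
  then show "(if D x y then ennreal (R x y * measure M {w\<in>space M. P x y w}) else 0)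
      \<le> ennreal (2 * exp (16 * 3\<^sup>2 / pi) * (1 + norm x) powr (- 3) * (1 + dist y (c x)) powr (- 3))"
    by (auto intro: ennreal_leI)
qed auto

theorem lemma1:
  fixes \<alpha> :: real and M :: "'w measure" and Phi :: "'w \<Rightarrow> (real^2) set"
  assumes "0 < \<alpha>" and "\<alpha> < 1"
    and "poisson_pp M Phi"
  shows "sigmaV2 \<alpha> M Phi < \<infinity>"
proof -
  have rho_le: "(rho \<alpha> x1 x2 x3 x4)\<^sup>2 \<le> 1" for x1 x2 x3 x4
    using assms by (intro rho_square_le_1) auto
  have "sigma0 \<alpha> M Phi < \<infinity>"
    using assms by (intro sigma0_finite)
  moreover have "sigma1_31 \<alpha> M Phi < \<infinity>" "sigma1_32 \<alpha> M Phi < \<infinity>"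
    "sigma1_41 \<alpha> M Phi < \<infinity>" "sigma1_42 \<alpha> M Phi < \<infinity>"
    unfolding sigma1_31_def q31_def sigma1_32_def q32_def sigma1_41_def q41_def sigma1_42_def q42_def
    by (rule nn_integral_edge_pair_finite[OF assms(3)], rule rho_le, blast)+
  moreover have "(2::ennreal) / 3 < \<infinity>"
    using divide_ennreal[of 2 3] by simp
  ultimately show ?thesis
    unfolding sigmaV2_def by (simp add: ennreal_mult_less_top)
qed

end
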